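(* Let $v,X,Y\in\mathbb{R}^d$ with $\|X\|<\|v\|$ and $\|Y\|<\|v\|$. Then $$\alpha(v+X,v+Y)\geq -\frac{\|X\|\|Y\|}{\|v\|^2}+\sqrt{1-\frac{\|X\|^2}{\|v\|^2}}\sqrt{1-\frac{\|Y\|^2}{\|v\|^2}}.$$
   Context: For nonzero $a,b\in\mathbb{R}^d$, the cosine similarity is $\alpha(a,b)=\frac{\langle a,b\rangle}{\|a\|\|b\|}$. *)

theory Defs
  imports "HOL-Analysis.Analysis"
begin

definition cos_sim :: "real ^ 'n \<Rightarrow> real ^ 'n \<Rightarrow> real" where
  "cos_sim a b = (a \<bullet> b) / (norm a * norm b)"

end

theory Submission
  imports Defs
begin

text \<open>
  Write \<open>\<theta>(a, b)\<close> for the angle between \<open>a\<close> and \<open>b\<close>. Since \<open>\<parallel>X\<parallel> < \<parallel>v\<parallel>\<close>, the vector \<open>v + X\<close>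
  stays in the cone around \<open>v\<close> of half-angle \<open>arcsin (\<parallel>X\<parallel>/\<parallel>v\<parallel>)\<close>, and likewise for \<open>v + Y\<close>.
  By the triangle inequality for angles, \<open>\<theta>(v + X, v + Y) \<le> arcsin (\<parallel>X\<parallel>/\<parallel>v\<parallel>) + arcsin (\<parallel>Y\<parallel>/\<parallel>v\<parallel>)\<close>,
  and the cosine of the right-hand side is the claimed bound. Angles are avoided below:
  the triangle inequality is used in the cosine form \<open>cos \<theta>(u, w) \<ge> cos (\<theta>(u, v) + \<theta>(v, w))\<close>,
  obtained by splitting \<open>u\<close> and \<open>w\<close> along \<open>v\<close> and its orthogonal complement.
\<close>

lemma inner_sgn_sgn:
  fixes a b :: "'a::real_inner"
  shows "sgn a \<bullet> sgn b = a \<bullet> b / (norm a * norm b)"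
  by (simp add: sgn_div_norm divide_inverse_commute)

lemma cos_sim_eq_inner_sgn: "cos_sim a b = sgn a \<bullet> sgn b"
  by (simp add: cos_sim_def inner_sgn_sgn)

lemma abs_inner_sgn_le_1:
  fixes a b :: "'a::real_inner"
  shows "\<bar>sgn a \<bullet> sgn b\<bar> \<le> 1"
proof -
  have "norm (sgn a) * norm (sgn b) \<le> 1"
    by (simp add: norm_sgn)
  then show ?thesis
    using Cauchy_Schwarz_ineq2[of "sgn a" "sgn b"] by linarith
qed

lemma inner_ge_cos_add_of_norm_1:
  fixes u v w :: "'a::real_inner"
  assumes "norm u = 1" "norm v = 1" "norm w = 1"
  shows "(u \<bullet> v) * (w \<bullet> v) - sqrt (1 - (u \<bullet> v)\<^sup>2) * sqrt (1 - (w \<bullet> v)\<^sup>2) \<le> u \<bullet> w"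
proof -
  define U where "U = u - (u \<bullet> v) *\<^sub>R v"
  define W where "W = w - (w \<bullet> v) *\<^sub>R v"
  have unit: "u \<bullet> u = 1" "v \<bullet> v = 1" "w \<bullet> w = 1"
    using assms by (simp_all add: norm_eq_1)
  have split: "u \<bullet> w = (u \<bullet> v) * (w \<bullet> v) + U \<bullet> W"
    unfolding U_def W_def using unit
    by (simp add: inner_diff_left inner_diff_right inner_commute algebra_simps)
  have "U \<bullet> U = 1 - (u \<bullet> v)\<^sup>2" "W \<bullet> W = 1 - (w \<bullet> v)\<^sup>2"
    unfolding U_def W_def using unit
    by (simp_all add: inner_diff_left inner_diff_right inner_commute algebra_simps power2_eq_square)
  then have "norm U = sqrt (1 - (u \<bullet> v)\<^sup>2)" "norm W = sqrt (1 - (w \<bullet> v)\<^sup>2)"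
    by (simp_all add: norm_eq_sqrt_inner)
  moreover have "- (norm U * norm W) \<le> U \<bullet> W"
    using Cauchy_Schwarz_ineq2[of U W] by linarith
  ultimately show ?thesis
    using split by simp
qed

lemma inner_sgn_add_ge:
  fixes v X :: "'a::real_inner"
  assumes "norm X < norm v"
  shows "sqrt (1 - (norm X / norm v)\<^sup>2) \<le> sgn (v + X) \<bullet> sgn v"
proof -
  define u where "u = v + X"
  have "norm v > 0"
    using assms norm_ge_zero[of X] by linarith
  have uv: "u \<bullet> v = (norm v)\<^sup>2 + X \<bullet> v"
    unfolding u_def by (simp add: inner_add_left power2_norm_eq_inner)
  have uu: "(norm u)\<^sup>2 = (norm v)\<^sup>2 + 2 * (X \<bullet> v) + (norm X)\<^sup>2"
    unfolding u_def power2_norm_eq_inner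
    by (simp add: inner_add_left inner_add_right inner_commute)
  have "norm X * norm v < (norm v)\<^sup>2"
    using assms \<open>norm v > 0\<close> by (simp add: power2_eq_square)
  then have "u \<bullet> v > 0"
    unfolding uv using Cauchy_Schwarz_ineq2[of X v] by linarith
  then have "norm u > 0"
    by auto
  have "(u \<bullet> v)\<^sup>2 - ((norm v)\<^sup>2 - (norm X)\<^sup>2) * (norm u)\<^sup>2 = (X \<bullet> v + (norm X)\<^sup>2)\<^sup>2"
    unfolding uv uu by (simp add: algebra_simps power2_eq_square)
  then have "((norm v)\<^sup>2 - (norm X)\<^sup>2) * (norm u)\<^sup>2 \<le> (u \<bullet> v)\<^sup>2"
    by (metis diff_ge_0_iff_ge zero_le_power2)
  then have "((norm v)\<^sup>2 - (norm X)\<^sup>2) * (norm u)\<^sup>2 / (norm u * norm v)\<^sup>2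
      \<le> (u \<bullet> v)\<^sup>2 / (norm u * norm v)\<^sup>2"
    by (rule divide_right_mono) simp
  moreover have "1 - (norm X / norm v)\<^sup>2 = ((norm v)\<^sup>2 - (norm X)\<^sup>2) * (norm u)\<^sup>2 / (norm u * norm v)\<^sup>2"
    using \<open>norm u > 0\<close> \<open>norm v > 0\<close> by (simp add: field_simps)
  moreover have "(sgn u \<bullet> sgn v)\<^sup>2 = (u \<bullet> v)\<^sup>2 / (norm u * norm v)\<^sup>2"
    by (simp add: inner_sgn_sgn power_divide)
  ultimately have "1 - (norm X / norm v)\<^sup>2 \<le> (sgn u \<bullet> sgn v)\<^sup>2"
    by linarith
  moreover have "sgn u \<bullet> sgn v \<ge> 0"
    using \<open>u \<bullet> v > 0\<close> by (simp add: inner_sgn_sgn)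
  ultimately show ?thesis
    unfolding u_def by (simp add: real_sqrt_le_iff real_le_lsqrt)
qed

lemma sqrt_1_minus_power2_le_swap:
  fixes t c :: real
  assumes "0 \<le> t" "t \<le> 1" "sqrt (1 - t\<^sup>2) \<le> c" "c \<le> 1"
  shows "0 \<le> c" "0 \<le> sqrt (1 - c\<^sup>2)" "sqrt (1 - c\<^sup>2) \<le> t"
proof -
  have "0 \<le> 1 - t\<^sup>2"
    using assms(1,2) by (simp add: power_le_one)
  then show "0 \<le> c"
    using real_sqrt_ge_zero[OF \<open>0 \<le> 1 - t\<^sup>2\<close>] assms(3) by linarith
  then have "c\<^sup>2 \<le> 1"
    using assms(4) by (simp add: power_le_one)
  then show "0 \<le> sqrt (1 - c\<^sup>2)"
    by simp
  have "1 - t\<^sup>2 \<le> c\<^sup>2"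
    using power_mono[OF assms(3) real_sqrt_ge_zero[OF \<open>0 \<le> 1 - t\<^sup>2\<close>], of 2] \<open>0 \<le> 1 - t\<^sup>2\<close>
    by simp
  then show "sqrt (1 - c\<^sup>2) \<le> t"
    using assms(1) by (simp add: real_le_lsqrt)
qed

lemma cos_add_ge_of_sqrt_le:
  fixes a b x y :: real
  assumes x: "0 \<le> x" "x \<le> 1" "sqrt (1 - x\<^sup>2) \<le> a" "a \<le> 1"
    and y: "0 \<le> y" "y \<le> 1" "sqrt (1 - y\<^sup>2) \<le> b" "b \<le> 1"
  shows "sqrt (1 - x\<^sup>2) * sqrt (1 - y\<^sup>2) - x * y \<le> a * b - sqrt (1 - a\<^sup>2) * sqrt (1 - b\<^sup>2)"
proof -
  note a = sqrt_1_minus_power2_le_swap[OF x] and b = sqrt_1_minus_power2_le_swap[OF y]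
  have "sqrt (1 - a\<^sup>2) * sqrt (1 - b\<^sup>2) \<le> x * y"
    using a b x y by (intro mult_mono) auto
  moreover have "sqrt (1 - x\<^sup>2) * sqrt (1 - y\<^sup>2) \<le> a * b"
    using a b x y by (intro mult_mono) (auto simp: power_le_one)
  ultimately show ?thesis
    by linarith
qed

theorem lemma1:
  fixes v X Y :: "real ^ 'n"
  assumes "norm X < norm v" and "norm Y < norm v"
  shows "cos_sim (v + X) (v + Y) \<ge>
           - (norm X * norm Y) / (norm v)\<^sup>2
           + sqrt (1 - (norm X)\<^sup>2 / (norm v)\<^sup>2) * sqrt (1 - (norm Y)\<^sup>2 / (norm v)\<^sup>2)"
proof -
  define x where "x = norm X / norm v"
  define y where "y = norm Y / norm v"
  define a where "a = sgn (v + X) \<bullet> sgn v"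
  define b where "b = sgn (v + Y) \<bullet> sgn v"
  have "norm v > 0"
    using assms(1) norm_ge_zero[of X] by linarith
  then have "v + X \<noteq> 0" "v + Y \<noteq> 0" "v \<noteq> 0"
    using assms by (auto simp: add_eq_0_iff)
  have "a * b - sqrt (1 - a\<^sup>2) * sqrt (1 - b\<^sup>2) \<le> cos_sim (v + X) (v + Y)"
    unfolding a_def b_def cos_sim_eq_inner_sgn
    using \<open>v + X \<noteq> 0\<close> \<open>v + Y \<noteq> 0\<close> \<open>v \<noteq> 0\<close>
    by (intro inner_ge_cos_add_of_norm_1) (simp_all add: norm_sgn)
  moreover have "sqrt (1 - x\<^sup>2) * sqrt (1 - y\<^sup>2) - x * y \<le> a * b - sqrt (1 - a\<^sup>2) * sqrt (1 - b\<^sup>2)"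
    using assms \<open>norm v > 0\<close> inner_sgn_add_ge[OF assms(1)] inner_sgn_add_ge[OF assms(2)]
      abs_inner_sgn_le_1[of "v + X" v] abs_inner_sgn_le_1[of "v + Y" v]
    unfolding a_def b_def x_def y_def
    by (intro cos_add_ge_of_sqrt_le) auto
  ultimately show ?thesis
    by (simp add: x_def y_def power_divide power2_eq_square)
qed

end
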